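(* For every bipartite graph $G$, $\mathbf{tw}(G)\le 6\,\mathbf{mimw}(G')$, where $G'$ is defined below.
   Context: For $G=(V,E)$, $G'$ has vertices $x_v,y_v$ for each $v\in V$ and $p_{e,u},q_{e,u},p_{e,v},q_{e,v}$ for each edge $e=uv\in E$; its edges are $x_vy_u$ for all $u,v\in V$, and for each $e=uv\in E$ the edges $p_{e,u}q_{e,u}$, $p_{e,v}q_{e,v}$, $x_up_{e,u}$, $y_vq_{e,u}$, $x_vp_{e,v}$, $y_uq_{e,v}$. $\mathbf{tw}$ is treewidth. A branch decomposition $(T,\delta)$ of a graph $H$ is a tree with maximum degree $3$ and a bijection from its leaves to $V(H)$; each node of $T$ (rooted) yields a cut $(A,\bar A)$ with $A$ the labels of leaves below it. $\mathbf{mimw}(H)$ is the minimum over branch decompositions of the maximum over their cuts of the size of a maximum induced matching in $H[A,\bar A]$ (vertex set $V(H)$, edges of $H$ between $A$ and $\bar A$). *)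

theory Defs
  imports Main
begin

definition graph :: "'a set \<Rightarrow> 'a set set \<Rightarrow> bool" where
  "graph V E \<longleftrightarrow> finite V \<and>
     (\<forall>e\<in>E. \<exists>u v. e = {u, v} \<and> u \<in> V \<and> v \<in> V \<and> u \<noteq> v)"

definition bipartite :: "'a set \<Rightarrow> 'a set set \<Rightarrow> bool" where
  "bipartite V E \<longleftrightarrow> (\<exists>X. X \<subseteq> V \<and>
     (\<forall>e\<in>E. \<exists>u v. e = {u, v} \<and> u \<in> X \<and> v \<in> V - X))"

definition walk :: "'a set \<Rightarrow> 'a set set \<Rightarrow> 'a list \<Rightarrow> bool" where
  "walk V E xs \<longleftrightarrow> xs \<noteq> [] \<and> set xs \<subseteq> V \<and>
     (\<forall>i. Suc i < length xs \<longrightarrow> {xs ! i, xs ! Suc i} \<in> E)"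

definition connected_graph :: "'a set \<Rightarrow> 'a set set \<Rightarrow> bool" where
  "connected_graph V E \<longleftrightarrow>
     (\<forall>a\<in>V. \<forall>b\<in>V. \<exists>xs. walk V E xs \<and> hd xs = a \<and> last xs = b)"

definition has_cycle :: "'a set \<Rightarrow> 'a set set \<Rightarrow> bool" where
  "has_cycle V E \<longleftrightarrow> (\<exists>xs. walk V E xs \<and> distinct xs \<and> length xs \<ge> 3 \<and>
     {last xs, hd xs} \<in> E)"

definition tree :: "'b set \<Rightarrow> 'b set set \<Rightarrow> bool" where
  "tree N F \<longleftrightarrow> graph N F \<and> N \<noteq> {} \<and> connected_graph N F \<and> \<not> has_cycle N F"

definition degree :: "'b set set \<Rightarrow> 'b \<Rightarrow> nat" where
  "degree F t = card {e \<in> F. t \<in> e}"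

definition tree_decomposition ::
  "'a set \<Rightarrow> 'a set set \<Rightarrow> nat set \<Rightarrow> nat set set \<Rightarrow> (nat \<Rightarrow> 'a set) \<Rightarrow> bool" where
  "tree_decomposition V E N F \<beta> \<longleftrightarrow> tree N F \<and>
     (\<forall>t\<in>N. \<beta> t \<subseteq> V) \<and>
     (\<forall>v\<in>V. \<exists>t\<in>N. v \<in> \<beta> t) \<and>
     (\<forall>e\<in>E. \<exists>t\<in>N. e \<subseteq> \<beta> t) \<and>
     (\<forall>v\<in>V. connected_graph {t \<in> N. v \<in> \<beta> t} {f \<in> F. \<forall>t\<in>f. v \<in> \<beta> t})"

definition td_width :: "nat set \<Rightarrow> (nat \<Rightarrow> 'a set) \<Rightarrow> nat" where
  "td_width N \<beta> = Max ((\<lambda>t. card (\<beta> t)) ` N) - 1"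

definition treewidth :: "'a set \<Rightarrow> 'a set set \<Rightarrow> nat" where
  "treewidth V E = Inf {w. \<exists>N F \<beta>. tree_decomposition V E N F \<beta> \<and> w = td_width N \<beta>}"

definition cut_edges :: "'a set \<Rightarrow> 'a set set \<Rightarrow> 'a set \<Rightarrow> 'a set set" where
  "cut_edges V E A = {e \<in> E. \<exists>u v. e = {u, v} \<and> u \<in> A \<and> v \<in> V - A}"

definition induced_matching_cut :: "'a set \<Rightarrow> 'a set set \<Rightarrow> 'a set \<Rightarrow> 'a set set \<Rightarrow> bool" where
  "induced_matching_cut V E A M \<longleftrightarrow> M \<subseteq> cut_edges V E A \<and>
     (\<forall>e\<in>M. \<forall>f\<in>M. e \<noteq> f \<longrightarrow> e \<inter> f = {} \<and>
        \<not> (\<exists>g\<in>cut_edges V E A. g \<inter> e \<noteq> {} \<and> g \<inter> f \<noteq> {}))"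

definition mim :: "'a set \<Rightarrow> 'a set set \<Rightarrow> 'a set \<Rightarrow> nat" where
  "mim V E A = Max (card ` {M. induced_matching_cut V E A M})"

definition leaves :: "nat set \<Rightarrow> nat set set \<Rightarrow> nat set" where
  "leaves N F = {t \<in> N. degree F t \<le> 1}"

definition branch_decomposition ::
  "'a set \<Rightarrow> 'a set set \<Rightarrow> nat set \<Rightarrow> nat set set \<Rightarrow> (nat \<Rightarrow> 'a) \<Rightarrow> bool" where
  "branch_decomposition V E N F \<delta> \<longleftrightarrow> tree N F \<and> (\<forall>t\<in>N. degree F t \<le> 3) \<and>
     bij_betw \<delta> (leaves N F) V"

text \<open>With root r, leaf l lies below node t iff every path from r to l
passes through t, i.e. there is no walk from r to l avoiding t.\<close>
definition leaves_below :: "nat set \<Rightarrow> nat set set \<Rightarrow> nat \<Rightarrow> nat \<Rightarrow> nat set" where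
  "leaves_below N F r t = {l \<in> leaves N F.
     \<not> (\<exists>xs. walk N F xs \<and> hd xs = r \<and> last xs = l \<and> t \<notin> set xs)}"

definition bd_mimw :: "'a set \<Rightarrow> 'a set set \<Rightarrow> nat set \<Rightarrow> nat set set \<Rightarrow> (nat \<Rightarrow> 'a) \<Rightarrow> nat \<Rightarrow> nat" where
  "bd_mimw V E N F \<delta> r = Max ((\<lambda>t. mim V E (\<delta> ` leaves_below N F r t)) ` N)"

definition mimw :: "'a set \<Rightarrow> 'a set set \<Rightarrow> nat" where
  "mimw V E = Inf {k. \<exists>N F \<delta> r. branch_decomposition V E N F \<delta> \<and> r \<in> N \<and>
                        k = bd_mimw V E N F \<delta> r}"

datatype 'a gvert = Xv 'a | Yv 'a | Pv "'a set" 'a | Qv "'a set" 'a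

definition G'_V :: "'a set \<Rightarrow> 'a set set \<Rightarrow> 'a gvert set" where
  "G'_V V E = Xv ` V \<union> Yv ` V \<union> {Pv e u | e u. e \<in> E \<and> u \<in> e} \<union> {Qv e u | e u. e \<in> E \<and> u \<in> e}"

definition G'_E :: "'a set \<Rightarrow> 'a set set \<Rightarrow> 'a gvert set set" where
  "G'_E V E = {{Xv v, Yv u} | u v. u \<in> V \<and> v \<in> V} \<union>
     {{Pv e u, Qv e u} | e u. e \<in> E \<and> u \<in> e} \<union>
     {{Xv u, Pv e u} | e u. e \<in> E \<and> u \<in> e} \<union>
     {{Yv w, Qv e u} | e u w. e \<in> E \<and> e = {u, w} \<and> u \<noteq> w}"

end

theory Submission
  imports Defs
begin

text \<open>
Take a rooted branch decomposition (T, \<delta>) of G' of width k = mimw(G'). Every vertex v of G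
owns a territory in G': x_v with all p_{e,v}, q_{e,v} if v \<in> X, and y_v with all q_{e,u}
(e = uv) otherwise. Let L v be the set of leaves of T labelled by the territory of v and put v
into the bag of every node of the Steiner subtree of L v. This is a tree decomposition of G,
because the territories of the two ends of an edge e = uv (u \<in> X) share q_{e,u}.

A vertex in the bag of a node t owns the leaf t, or its leaf set is split by the cut of T
above t or above a child of t. No edge of G' meets two territories on the same side of the
bipartition, so the split territories of one side yield an induced matching of the
corresponding cut of G', giving at most 2k split vertices per cut. As T has maximum degree 3
and each vertex of G' lies in at most two territories, every bag has at most 6k + 1 vertices.
\<close>

section \<open>Walks\<close>

lemma walk_single [simp]: "walk N F [x] \<longleftrightarrow> x \<in> N"
  by (auto simp: walk_def)

lemma walk_Cons2:
  "walk N F (x # y # xs) \<longleftrightarrow> x \<in> N \<and> {x, y} \<in> F \<and> walk N F (y # xs)"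
proof
  assume w: "walk N F (x # y # xs)"
  have "{x, y} \<in> F"
    using w unfolding walk_def by (metis Suc_less_eq length_Cons nth_Cons_0 nth_Cons_Suc zero_less_Suc)
  moreover have "walk N F (y # xs)"
    unfolding walk_def
  proof (intro conjI allI impI)
    fix i assume "Suc i < length (y # xs)"
    then have "Suc (Suc i) < length (x # y # xs)" by simp
    then show "{(y # xs) ! i, (y # xs) ! Suc i} \<in> F" using w unfolding walk_def by auto
  qed (use w in \<open>auto simp: walk_def\<close>)
  ultimately show "x \<in> N \<and> {x, y} \<in> F \<and> walk N F (y # xs)" using w by (auto simp: walk_def)
next
  assume h: "x \<in> N \<and> {x, y} \<in> F \<and> walk N F (y # xs)"
  show "walk N F (x # y # xs)" unfolding walk_def
  proof (intro conjI allI impI)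
    show "set (x # y # xs) \<subseteq> N" using h by (auto simp: walk_def)
    fix i assume "Suc i < length (x # y # xs)"
    then show "{(x # y # xs) ! i, (x # y # xs) ! Suc i} \<in> F"
      using h by (cases i) (auto simp: walk_def)
  qed simp
qed

lemma walk_Cons:
  "walk N F (x # xs) \<longleftrightarrow> x \<in> N \<and> (xs = [] \<or> {x, hd xs} \<in> F \<and> walk N F xs)"
  by (cases xs) (auto simp: walk_Cons2)

lemma walk_nonempty: "walk N F xs \<Longrightarrow> xs \<noteq> []"
  by (simp add: walk_def)

lemma walk_set: "walk N F xs \<Longrightarrow> set xs \<subseteq> N"
  by (simp add: walk_def)

lemma walk_mono: "walk N F xs \<Longrightarrow> N \<subseteq> N' \<Longrightarrow> F \<subseteq> F' \<Longrightarrow> walk N' F' xs"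
  unfolding walk_def by blast

lemma walk_restrict:
  assumes "walk N F xs" "set xs \<subseteq> S"
  shows "walk S {f \<in> F. \<forall>t\<in>f. t \<in> S} xs"
  unfolding walk_def
proof (intro conjI allI impI)
  fix i assume "Suc i < length xs"
  then have "xs ! i \<in> set xs" "xs ! Suc i \<in> set xs" by simp_all
  then show "{xs ! i, xs ! Suc i} \<in> {f \<in> F. \<forall>t\<in>f. t \<in> S}"
    using assms \<open>Suc i < length xs\<close> unfolding walk_def by auto
qed (use assms in \<open>auto simp: walk_def\<close>)

lemma walk_append:
  assumes "xs \<noteq> []" "ys \<noteq> []"
  shows "walk N F (xs @ ys) \<longleftrightarrow> walk N F xs \<and> walk N F ys \<and> {last xs, hd ys} \<in> F"
  using assms
proof (induction xs)
  case (Cons a xs)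
  show ?case
  proof (cases xs)
    case Nil
    then show ?thesis using Cons.prems by (cases ys) (auto simp: walk_Cons2)
  next
    case (Cons b xs')
    then show ?thesis using Cons.IH Cons.prems by (auto simp: walk_Cons2)
  qed
qed simp

lemma walk_prefix: "walk N F (xs @ ys) \<Longrightarrow> xs \<noteq> [] \<Longrightarrow> walk N F xs"
  by (cases "ys = []") (auto simp: walk_append)

lemma walk_suffix: "walk N F (xs @ ys) \<Longrightarrow> ys \<noteq> [] \<Longrightarrow> walk N F ys"
  by (cases "xs = []") (auto simp: walk_append)

lemma walk_edge_mid:
  "walk N F (xs @ ys) \<Longrightarrow> xs \<noteq> [] \<Longrightarrow> ys \<noteq> [] \<Longrightarrow> {last xs, hd ys} \<in> F"
  by (simp add: walk_append)

lemma walk_rev: "walk N F xs \<Longrightarrow> walk N F (rev xs)"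
proof (induction xs rule: induct_list012)
  case (3 x y zs)
  have "walk N F (rev (y # zs) @ [x])"
    using 3 by (subst walk_append) (auto simp: walk_Cons2 insert_commute)
  then show ?case by simp
qed (simp_all add: walk_def)

lemma walk_join:
  assumes "walk N F xs" "walk N F ys" "last xs = hd ys"
  shows "walk N F (xs @ tl ys)" "hd (xs @ tl ys) = hd xs" "last (xs @ tl ys) = last ys"
    "set (xs @ tl ys) = set xs \<union> set ys"
proof -
  obtain y ys' where ys: "ys = y # ys'" using walk_nonempty[OF assms(2)] by (cases ys) auto
  have xs: "xs \<noteq> []" using walk_nonempty[OF assms(1)] .
  show "walk N F (xs @ tl ys)"
    using assms xs ys by (cases ys') (auto simp: walk_append walk_Cons2)
  show "hd (xs @ tl ys) = hd xs" using xs by simp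
  show "last (xs @ tl ys) = last ys" using assms(3) xs ys by (cases ys') auto
  have "y \<in> set xs" using assms(3) xs ys by (metis last_in_set list.sel(1))
  then show "set (xs @ tl ys) = set xs \<union> set ys" using ys by auto
qed

lemma walk_shorten:
  assumes "walk N F xs"
  shows "\<exists>ys. walk N F ys \<and> distinct ys \<and> hd ys = hd xs \<and> last ys = last xs \<and> set ys \<subseteq> set xs"
  using assms
proof (induction "length xs" arbitrary: xs rule: less_induct)
  case less
  show ?case
  proof (cases "distinct xs")
    case False
    then obtain as y bs cs where xs: "xs = as @ [y] @ bs @ [y] @ cs"
      using not_distinct_decomp by blast
    let ?zs = "as @ [y] @ cs"
    have w: "walk N F ((as @ [y]) @ (bs @ [y] @ cs))" using less.prems xs by simp
    have w1: "walk N F (as @ [y])" using walk_prefix[OF w] by simp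
    have "walk N F ((as @ [y] @ bs) @ (y # cs))" using less.prems xs by simp
    then have w2: "walk N F (y # cs)" using walk_suffix by blast
    have "walk N F ?zs" using walk_join(1)[OF w1 w2] by simp
    moreover have "length ?zs < length xs" using xs by simp
    ultimately obtain ys where "walk N F ys \<and> distinct ys \<and> hd ys = hd ?zs \<and> last ys = last ?zs
        \<and> set ys \<subseteq> set ?zs"
      using less.hyps by blast
    moreover have "hd ?zs = hd xs" using xs by (cases as) auto
    moreover have "last ?zs = last xs" using xs by (cases cs) auto
    moreover have "set ?zs \<subseteq> set xs" using xs by auto
    ultimately show ?thesis by (metis order_trans)
  qed (use less.prems in blast)
qed

section \<open>Acyclic graphs: uniqueness of paths\<close>

lemma two_paths_cycle:
  assumes w1: "walk N F (a # P @ [c])" and w2: "walk N F (a # Q @ [c])"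
    and d1: "distinct (a # P @ [c])" and d2: "distinct (a # Q @ [c])"
    and disj: "set P \<inter> set Q = {}" and first: "hd (P @ [c]) \<noteq> hd (Q @ [c])"
  shows "has_cycle N F"
proof -
  define cyc where "cyc = (a # P @ [c]) @ rev Q"
  have "walk N F (Q @ [c])" using w2 walk_suffix[of N F "[a]" "Q @ [c]"] by simp
  then have wr: "walk N F (c # rev Q)" using walk_rev by fastforce
  have "walk N F ((a # P @ [c]) @ tl (c # rev Q))" by (rule walk_join(1)[OF w1 wr]) simp
  then have wc: "walk N F cyc" by (simp add: cyc_def)
  have dc: "distinct cyc" using d1 d2 disj by (auto simp: cyc_def)
  have hd_in: "hd (Q @ [c]) \<in> set cyc" "hd (P @ [c]) \<in> set cyc"
    by (cases Q; simp add: cyc_def) (cases P; simp add: cyc_def)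
  have "a \<noteq> hd (P @ [c])" "a \<noteq> hd (Q @ [c])"
    using d1 d2 by (metis distinct.simps(2) hd_in_set snoc_eq_iff_butlast)+
  then have "card {a, hd (P @ [c]), hd (Q @ [c])} = 3" using first by simp
  moreover have "{a, hd (P @ [c]), hd (Q @ [c])} \<subseteq> set cyc" using hd_in by (simp add: cyc_def)
  ultimately have "3 \<le> length cyc"
    using distinct_card[OF dc] by (metis List.finite_set card_mono)
  moreover have "last cyc = hd (Q @ [c])" by (cases Q) (simp_all add: cyc_def last_rev)
  moreover have "{a, hd (Q @ [c])} \<in> F" using w2 by (simp add: walk_Cons)
  ultimately show ?thesis
    using wc dc unfolding has_cycle_def by (metis cyc_def insert_commute list.sel(1) append_Cons)
qed

lemma path_unique:
  assumes "\<not> has_cycle N F"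
  shows "walk N F P \<Longrightarrow> walk N F Q \<Longrightarrow> distinct P \<Longrightarrow> distinct Q \<Longrightarrow>
    hd P = hd Q \<Longrightarrow> last P = last Q \<Longrightarrow> P = Q"
proof (induction P arbitrary: Q)
  case Nil then show ?case by (simp add: walk_def)
next
  case (Cons a P')
  obtain Q' where Q: "Q = a # Q'" using Cons.prems walk_nonempty by (cases Q) auto
  show ?case
  proof (cases "P' = [] \<or> Q' = []")
    case True
    then have "P' = [] \<and> Q' = []"
      using Q Cons.prems(3,4,6) by (auto dest: last_in_set split: if_splits)
    then show ?thesis using Q by simp
  next
    case False
    then have wP': "walk N F P'" and wQ': "walk N F Q'"
      using Cons.prems(1,2) Q walk_suffix[of N F "[a]"] by auto
    show ?thesis
    proof (cases "hd P' = hd Q'")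
      case True
      then show ?thesis using Cons.IH[OF wP' wQ'] Cons.prems Q False by simp
    next
      case first: False
      have "\<exists>x\<in>set P'. x \<in> set Q'" using False Cons.prems(6) Q by (metis last_ConsR last_in_set)
      then obtain P1 c P2 where P': "P' = P1 @ c # P2" and "c \<in> set Q'"
        and P1: "\<forall>y\<in>set P1. y \<notin> set Q'"
        using split_list_first_prop[of P' "\<lambda>x. x \<in> set Q'"] by blast
      then obtain Q1 Q2 where Q': "Q' = Q1 @ c # Q2" by (metis split_list)
      have "walk N F ((a # P1 @ [c]) @ P2)" "walk N F ((a # Q1 @ [c]) @ Q2)"
        using Cons.prems(1,2) P' Q Q' by simp_all
      then have "walk N F (a # P1 @ [c])" "walk N F (a # Q1 @ [c])"
        using walk_prefix by blast+
      moreover have "distinct (a # P1 @ [c])" "distinct (a # Q1 @ [c])"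
        using Cons.prems(3,4) P' Q Q' by auto
      moreover have "set P1 \<inter> set Q1 = {}" using P1 Q' by auto
      moreover have "hd (P1 @ [c]) \<noteq> hd (Q1 @ [c])" using first P' Q' by (cases P1; cases Q1) simp_all
      ultimately have "has_cycle N F" by (rule two_paths_cycle)
      then show ?thesis using assms by simp
    qed
  qed
qed

lemma path_sub_walk:
  assumes "\<not> has_cycle N F" "walk N F P" "distinct P" "walk N F W" "hd W = hd P" "last W = last P"
  shows "set P \<subseteq> set W"
proof -
  obtain Z where Z: "walk N F Z" "distinct Z" "hd Z = hd W" "last Z = last W" "set Z \<subseteq> set W"
    using walk_shorten[OF assms(4)] by blast
  have "Z = P" using path_unique[OF assms(1) Z(1) assms(2) Z(2) assms(3)] Z assms by simp
  then show ?thesis using Z by simp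
qed

section \<open>Trees, separation and Steiner subtrees\<close>

lemma tree_acyclic: "tree N F \<Longrightarrow> \<not> has_cycle N F"
  by (simp add: tree_def)

lemma tree_edge: "tree N F \<Longrightarrow> e \<in> F \<Longrightarrow> \<exists>u v. e = {u, v} \<and> u \<in> N \<and> v \<in> N \<and> u \<noteq> v"
  by (auto simp: tree_def graph_def)

lemma tree_finite: "tree N F \<Longrightarrow> finite N"
  by (simp add: tree_def graph_def)

lemma tree_finite_edges: assumes "tree N F" shows "finite F"
proof -
  have "F \<subseteq> Pow N" using tree_edge[OF assms] by blast
  then show ?thesis using tree_finite[OF assms] by (meson finite_Pow_iff finite_subset)
qed

lemma tree_path:
  assumes "tree N F" "a \<in> N" "b \<in> N"
  shows "\<exists>P. walk N F P \<and> distinct P \<and> hd P = a \<and> last P = b"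
proof -
  obtain xs where "walk N F xs" "hd xs = a" "last xs = b"
    using assms unfolding tree_def connected_graph_def by blast
  then show ?thesis using walk_shorten by metis
qed

lemma tree_singleton: "tree {x} {}"
proof -
  have "\<not> has_cycle {x} {}"
  proof
    assume "has_cycle {x} {}"
    then obtain xs where xs: "walk {x} {} xs" "distinct xs" "3 \<le> length xs" unfolding has_cycle_def by blast
    have "card (set xs) \<le> card {x}" using walk_set[OF xs(1)] by (intro card_mono) auto
    then show False using xs distinct_card by fastforce
  qed
  then show ?thesis
    by (auto simp: tree_def graph_def connected_graph_def intro!: exI[of _ "[x]"])
qed

definition separates :: "'b set \<Rightarrow> 'b set set \<Rightarrow> 'b \<Rightarrow> 'b \<Rightarrow> 'b \<Rightarrow> bool" where
  "separates N F a b t \<longleftrightarrow> (\<forall>xs. walk N F xs \<and> hd xs = a \<and> last xs = b \<longrightarrow> t \<in> set xs)"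

lemma leaves_below_separates: "leaves_below N F r t = {l \<in> leaves N F. separates N F r l t}"
  unfolding leaves_below_def separates_def by blast

lemma separates_start: "separates N F a b a"
  unfolding separates_def by (metis hd_in_set walk_nonempty)

lemma separates_end: "separates N F a b b"
  unfolding separates_def by (metis last_in_set walk_nonempty)

lemma separates_sym: "separates N F a b t \<Longrightarrow> separates N F b a t"
  unfolding separates_def by (metis walk_rev hd_rev last_rev set_rev)

lemma separates_root:
  assumes "separates N F a b t"
  shows "separates N F r a t \<or> separates N F r b t"
proof (rule ccontr)
  assume "\<not> ?thesis"
  then obtain Wa Wb where Wa: "walk N F Wa" "hd Wa = r" "last Wa = a" "t \<notin> set Wa"
    and Wb: "walk N F Wb" "hd Wb = r" "last Wb = b" "t \<notin> set Wb"
    unfolding separates_def by blast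
  have w: "walk N F (rev Wa)" and j: "last (rev Wa) = hd Wb"
    using walk_rev[OF Wa(1)] Wa Wb walk_nonempty[OF Wa(1)] by (simp_all add: last_rev)
  show False
    using walk_join[OF w Wb(1) j] assms Wa Wb walk_nonempty[OF Wa(1)] unfolding separates_def
    by (metis Un_iff hd_rev set_rev)
qed

lemma separates_path:
  assumes T: "tree N F" and sep: "separates N F a b t"
    and P: "walk N F P" "distinct P" "hd P = t" "last P = b" and s: "s \<in> set P"
  shows "separates N F a b s"
  unfolding separates_def
proof (intro allI impI)
  fix W assume W: "walk N F W \<and> hd W = a \<and> last W = b"
  then have "t \<in> set W" using sep unfolding separates_def by blast
  then obtain W1 W2 where W12: "W = W1 @ t # W2" by (metis split_list)
  then have "walk N F (t # W2)" using W walk_suffix by blast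
  moreover have "last (t # W2) = b" using W W12 by simp
  ultimately have "set P \<subseteq> set (t # W2)"
    using path_sub_walk[OF tree_acyclic[OF T] P(1,2), of "t # W2"] P by simp
  then show "s \<in> set W" using s W12 by auto
qed

lemma separates_extend:
  assumes sep: "separates N F r a t" and W: "walk N F W" "hd W = c" "last W = a" "t \<notin> set W"
  shows "separates N F r c t"
  unfolding separates_def
proof (intro allI impI; rule ccontr)
  fix U assume U: "walk N F U \<and> hd U = r \<and> last U = c" and "t \<notin> set U"
  then have "last U = hd W" using W by simp
  then show False
    using walk_join[OF conjunct1[OF U] W(1)] U W \<open>t \<notin> set U\<close> sep unfolding separates_def by auto
qed

lemma path_avoiding:
  assumes T: "tree N F" and rt: "r \<in> N" "t \<in> N" and sep: "separates N F r c t" and ct: "c \<noteq> t"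
  shows "\<exists>R. walk N F R \<and> hd R = r \<and> last R = t \<and> c \<notin> set R"
proof -
  obtain R where R: "walk N F R" "distinct R" "hd R = r" "last R = t" using tree_path[OF T rt] by blast
  have "c \<notin> set R"
  proof
    assume "c \<in> set R"
    then obtain R1 R2 where R12: "R = R1 @ c # R2" by (metis split_list)
    then have "walk N F (R1 @ [c])" using R walk_prefix[of N F "R1 @ [c]" R2] by simp
    moreover have "hd (R1 @ [c]) = r" using R R12 by (cases R1) auto
    ultimately have "t \<in> set R1" using sep ct unfolding separates_def by fastforce
    moreover have "t \<in> set (c # R2)" using R R12 by (metis last_appendR last_in_set list.distinct(1))
    ultimately show False using R(2) R12 by auto
  qed
  then show ?thesis using R by blast
qed

definition steiner :: "'b set \<Rightarrow> 'b set set \<Rightarrow> 'b set \<Rightarrow> 'b set" where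
  "steiner N F L = {t \<in> N. \<exists>a\<in>L. \<exists>b\<in>L. separates N F a b t}"

lemma steiner_mem: "l \<in> L \<Longrightarrow> l \<in> N \<Longrightarrow> l \<in> steiner N F L"
  unfolding steiner_def using separates_start[of N F l l] by blast

lemma steiner_path:
  assumes T: "tree N F" and L: "L \<subseteq> N" and ab: "a \<in> L" "b \<in> L"
    and t: "t \<in> N" "separates N F a b t"
  shows "\<exists>P. walk N F P \<and> set P \<subseteq> steiner N F L \<and> hd P = a \<and> last P = t"
proof -
  obtain P where P: "walk N F P" "distinct P" "hd P = a" "last P = t"
    using tree_path[OF T] L ab t by blast
  have "separates N F a b s" if s: "s \<in> set P" for s
  proof -
    have "walk N F (rev P)" "distinct (rev P)" "hd (rev P) = t" "last (rev P) = a"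
      using P walk_rev walk_nonempty[OF P(1)] by (simp_all add: hd_rev last_rev)
    moreover have "s \<in> set (rev P)" using s by simp
    ultimately have "separates N F b a s" by (rule separates_path[OF T separates_sym[OF t(2)]])
    then show ?thesis by (rule separates_sym)
  qed
  then have "set P \<subseteq> steiner N F L" using ab walk_set[OF P(1)] by (auto simp: steiner_def)
  then show ?thesis using P by blast
qed

lemma steiner_connected:
  assumes T: "tree N F" and L: "L \<subseteq> N"
  shows "connected_graph (steiner N F L) {f \<in> F. \<forall>t\<in>f. t \<in> steiner N F L}"
  unfolding connected_graph_def
proof (intro ballI)
  let ?S = "steiner N F L" let ?F = "{f \<in> F. \<forall>t\<in>f. t \<in> ?S}"
  have to_L: "\<exists>P. walk ?S ?F P \<and> hd P = a \<and> last P = t" if a: "a \<in> L" and t: "t \<in> ?S" for a t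
  proof -
    obtain b c where bc: "b \<in> L" "c \<in> L" "t \<in> N" "separates N F b c t"
      using t unfolding steiner_def by blast
    obtain P1 where P1: "walk N F P1" "set P1 \<subseteq> ?S" "hd P1 = a" "last P1 = b"
      using steiner_path[OF T L a bc(1) _ separates_end] L bc(1) by blast
    obtain P2 where P2: "walk N F P2" "set P2 \<subseteq> ?S" "hd P2 = b" "last P2 = t"
      using steiner_path[OF T L bc(1,2) bc(3,4)] by blast
    have w: "walk ?S ?F P1" "walk ?S ?F P2"
      using walk_restrict[OF P1(1,2)] walk_restrict[OF P2(1,2)] by simp_all
    have "last P1 = hd P2" using P1(4) P2(3) by simp
    from walk_join[OF w this] show ?thesis using P1(3) P2(4) by blast
  qed
  fix t1 t2 assume t: "t1 \<in> ?S" "t2 \<in> ?S"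
  then obtain a where a: "a \<in> L" unfolding steiner_def by blast
  obtain P1 P2 where P1: "walk ?S ?F P1" "hd P1 = a" "last P1 = t1"
    and P2: "walk ?S ?F P2" "hd P2 = a" "last P2 = t2"
    using to_L[OF a] t by blast
  have w: "walk ?S ?F (rev P1)" and j: "last (rev P1) = hd P2" and h: "hd (rev P1) = t1"
    using walk_rev[OF P1(1)] P1 P2 walk_nonempty[OF P1(1)] by (simp_all add: hd_rev last_rev)
  from walk_join[OF w P2(1) j] show "\<exists>xs. walk ?S ?F xs \<and> hd xs = t1 \<and> last xs = t2"
    using h P2(3) by blast
qed

definition children :: "'b set \<Rightarrow> 'b set set \<Rightarrow> 'b \<Rightarrow> 'b \<Rightarrow> 'b set" where
  "children N F r t = {c \<in> N. {t, c} \<in> F \<and> separates N F r c t}"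

lemma child_towards:
  assumes T: "tree N F" and r: "r \<in> N" and ab: "a \<in> N" "b \<in> N" "t \<noteq> a" "t \<noteq> b"
    and sep: "separates N F a b t" "separates N F r a t"
  shows "\<exists>c\<in>children N F r t. separates N F r a c \<and> \<not> separates N F r b c"
proof -
  obtain Q where Q: "walk N F Q" "distinct Q" "hd Q = a" "last Q = b" using tree_path[OF T ab(1,2)] by blast
  then have "t \<in> set Q" using sep(1) unfolding separates_def by blast
  then obtain Q1 Q2 where Q12: "Q = Q1 @ t # Q2" by (metis split_list)
  have ne: "Q1 \<noteq> []" "Q2 \<noteq> []" using Q12 Q ab by auto
  define c where "c = last Q1"
  have wQ1: "walk N F (Q1 @ [t])" using Q(1) Q12 walk_prefix[of N F "Q1 @ [t]" Q2] by simp
  have wQ2: "walk N F (t # Q2)" using Q(1) Q12 walk_suffix[of N F Q1 "t # Q2"] by simp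
  have edge: "{t, c} \<in> F" using walk_edge_mid[OF wQ1] ne by (simp add: c_def insert_commute)
  have tQ1: "t \<notin> set Q1" and cQ1: "c \<in> set Q1" using Q(2) Q12 ne by (simp_all add: c_def)
  have up: "walk N F (t # rev Q1)" "distinct (t # rev Q1)" "last (t # rev Q1) = a"
    using walk_rev[OF wQ1] Q Q12 ne by (simp_all add: last_rev)
  have "walk N F (rev Q1)" "hd (rev Q1) = c" "last (rev Q1) = a"
    using walk_rev walk_prefix[OF wQ1 ne(1)] up(3) ne by (simp_all add: c_def hd_rev)
  then have sep_c: "separates N F r c t" using separates_extend[OF sep(2)] tQ1 by simp
  then have child: "c \<in> children N F r t"
    using edge walk_set[OF wQ1] cQ1 by (auto simp: children_def)
  have a_below: "separates N F r a c" using separates_path[OF T sep(2) up(1,2) _ up(3)] cQ1 by simp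
  have tN: "t \<in> N" and ct: "c \<noteq> t" using walk_set[OF Q(1)] Q12 tQ1 cQ1 by auto
  obtain R where R: "walk N F R" "hd R = r" "last R = t" "c \<notin> set R"
    using path_avoiding[OF T r tN sep_c ct] by blast
  have j: "last R = hd (t # Q2)" using R by simp
  note RQ = walk_join[OF R(1) wQ2 j]
  have "c \<notin> set (R @ tl (t # Q2))" using RQ(4) R(4) Q(2) Q12 cQ1 by auto
  moreover have "last (R @ tl (t # Q2)) = b" using RQ(3) Q(4) Q12 by simp
  ultimately have "\<not> separates N F r b c" using RQ(1,2) R(2) unfolding separates_def by blast
  then show ?thesis using child a_below by blast
qed

lemma steiner_split:
  assumes T: "tree N F" and r: "r \<in> N" and L: "L \<subseteq> leaves N F" and t: "t \<in> steiner N F L"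
  shows "t \<in> L \<or> (L \<inter> leaves_below N F r t \<noteq> {} \<and> \<not> L \<subseteq> leaves_below N F r t) \<or>
    (\<exists>c\<in>children N F r t. L \<inter> leaves_below N F r c \<noteq> {} \<and> \<not> L \<subseteq> leaves_below N F r c)"
proof -
  obtain a b where ab: "a \<in> L" "b \<in> L" "separates N F a b t" using t unfolding steiner_def by blast
  have leaf: "a \<in> leaves N F" "b \<in> leaves N F" using ab L by auto
  then have abN: "a \<in> N" "b \<in> N" by (auto simp: leaves_def)
  show ?thesis
  proof (cases "t = a \<or> t = b")
    case False
    show ?thesis
    proof (cases "separates N F r a t \<and> separates N F r b t")
      case True
      then obtain c where "c \<in> children N F r t" "separates N F r a c" "\<not> separates N F r b c"
        using child_towards[OF T r abN _ _ ab(3)] \<open>\<not> (t = a \<or> t = b)\<close> by blast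
      moreover have "a \<in> leaves_below N F r c" "b \<notin> leaves_below N F r c"
        using calculation leaf by (simp_all add: leaves_below_separates)
      ultimately show ?thesis using ab by blast
    next
      case False
      then have "(a \<in> leaves_below N F r t \<and> b \<notin> leaves_below N F r t) \<or>
          (b \<in> leaves_below N F r t \<and> a \<notin> leaves_below N F r t)"
        using separates_root[OF ab(3)] leaf by (auto simp: leaves_below_separates)
      then show ?thesis using ab by blast
    qed
  qed (use ab in blast)
qed

definition nbrs :: "'b set set \<Rightarrow> 'b \<Rightarrow> 'b set" where
  "nbrs F t = {c. {t, c} \<in> F}"

lemma nbrs_card:
  assumes T: "tree N F"
  shows "finite (nbrs F t)" "card (nbrs F t) = degree F t"
proof -
  have "bij_betw (\<lambda>c. {t, c}) (nbrs F t) {e \<in> F. t \<in> e}"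
  proof (rule bij_betwI')
    fix e assume e: "e \<in> {e \<in> F. t \<in> e}"
    then obtain u v where "e = {u, v}" using tree_edge[OF T] by blast
    then show "\<exists>x\<in>nbrs F t. e = {t, x}" using e by (auto simp: nbrs_def insert_commute)
  qed (auto simp: nbrs_def doubleton_eq_iff)
  moreover have "finite {e \<in> F. t \<in> e}" using tree_finite_edges[OF T] by simp
  ultimately show "finite (nbrs F t)" "card (nbrs F t) = degree F t"
    unfolding degree_def using bij_betw_finite bij_betw_same_card by blast+
qed

lemma children_nbrs: "children N F r t \<subseteq> nbrs F t"
  by (auto simp: children_def nbrs_def)

lemma parent_exists:
  assumes T: "tree N F" and r: "r \<in> N" and t: "t \<in> N" "t \<noteq> r"
  shows "\<exists>p \<in> nbrs F t. p \<notin> children N F r t"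
proof -
  obtain R where R: "walk N F R" "distinct R" "hd R = r" "last R = t"
    using tree_path[OF T r t(1)] by blast
  obtain R' where R': "R = R' @ [t]" using R walk_nonempty by (metis append_butlast_last_id)
  have ne: "R' \<noteq> []" using R R' t by auto
  have "{last R', t} \<in> F" using walk_edge_mid[of N F R' "[t]"] R R' ne by simp
  moreover have "\<not> separates N F r (last R') t"
    using walk_prefix[of N F R' "[t]"] R R' ne unfolding separates_def by auto
  ultimately show ?thesis unfolding nbrs_def children_def by (auto simp: insert_commute)
qed

lemma children_card:
  assumes T: "tree N F" and r: "r \<in> N" and t: "t \<in> N"
  shows "card (children N F r t) + (if t = r then 0 else 1) \<le> degree F t"
proof (cases "t = r")
  case True then show ?thesis using card_mono[OF nbrs_card(1)[OF T] children_nbrs] nbrs_card[OF T] by simp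
next
  case False
  then obtain p where p: "p \<in> nbrs F t" "p \<notin> children N F r t" using parent_exists[OF T r t] by blast
  then have "children N F r t \<subseteq> nbrs F t - {p}" using children_nbrs[of N F r t] by blast
  then have "card (children N F r t) \<le> card (nbrs F t - {p})" using nbrs_card[OF T] by (intro card_mono) auto
  moreover have "0 < card (nbrs F t)" using p nbrs_card(1)[OF T] card_gt_0_iff by blast
  ultimately show ?thesis using p False nbrs_card[OF T] by (simp add: card_Diff_singleton)
qed

lemma leaves_below_root: "leaves_below N F r r = leaves N F"
  using separates_start by (auto simp: leaves_below_separates)

lemma leaves_below_subset: "leaves_below N F r t \<subseteq> leaves N F"
  by (auto simp: leaves_below_def)

text \<open>Below a leaf other than the root lies only the leaf itself: any leaf below it would force
the leaf to have two neighbours on the path from the root.\<close>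
lemma leaves_below_leaf:
  assumes T: "tree N F" and r: "r \<in> N" and t: "t \<in> leaves N F" "t \<noteq> r"
  shows "leaves_below N F r t = {t}"
proof -
  have "l = t" if l: "l \<in> leaves_below N F r t" for l
  proof (rule ccontr)
    assume lt: "l \<noteq> t"
    have lN: "l \<in> N" and sep: "separates N F r l t" using l by (auto simp: leaves_below_separates leaves_def)
    obtain R where R: "walk N F R" "distinct R" "hd R = r" "last R = l" using tree_path[OF T r lN] by blast
    then obtain R1 R2 where R12: "R = R1 @ t # R2" using sep unfolding separates_def by (metis split_list)
    have ne: "R1 \<noteq> []" "R2 \<noteq> []" using R12 R t lt by auto
    have "{last R1, t} \<in> F" "{t, hd R2} \<in> F"
      using walk_edge_mid[of N F R1 "t # R2"] walk_suffix[of N F R1 "t # R2"] R(1) R12 ne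
      by (simp_all, cases R2, simp_all add: walk_Cons2)
    then have "{last R1, hd R2} \<subseteq> nbrs F t" by (auto simp: nbrs_def insert_commute)
    moreover have "last R1 \<noteq> hd R2" using R(2) R12 ne by (metis disjoint_iff distinct_append hd_in_set last_in_set list.set_intros(2))
    ultimately have "2 \<le> card (nbrs F t)" using nbrs_card(1)[OF T] by (metis card_2_iff card_mono)
    then show False using t nbrs_card(2)[OF T] by (simp add: leaves_def)
  qed
  moreover have "t \<in> leaves_below N F r t" using t separates_end by (auto simp: leaves_below_separates)
  ultimately show ?thesis by blast
qed

section \<open>Treewidth\<close>

lemma treewidth_le: "tree_decomposition V E N F \<beta> \<Longrightarrow> treewidth V E \<le> td_width N \<beta>"
  unfolding treewidth_def by (rule cInf_lower) auto

lemma td_width_le: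
  assumes "finite N" "N \<noteq> {}" "\<And>t. t \<in> N \<Longrightarrow> card (\<beta> t) \<le> w + 1"
  shows "td_width N \<beta> \<le> w"
proof -
  have "Max ((\<lambda>t. card (\<beta> t)) ` N) \<le> w + 1" using assms by (subst Max_le_iff) auto
  then show ?thesis by (simp add: td_width_def)
qed

lemma treewidth_empty: "graph {} E \<Longrightarrow> treewidth {} E = 0"
proof -
  assume "graph {} E"
  then have "tree_decomposition {} E {0} {} (\<lambda>_. {})"
    using tree_singleton by (auto simp: tree_decomposition_def graph_def)
  then have "treewidth {} E \<le> td_width {0::nat} (\<lambda>_. {} :: 'a set)" by (rule treewidth_le)
  then show ?thesis by (simp add: td_width_def)
qed

lemma steiner_tree_decomposition:
  assumes T: "tree N F" and L: "\<And>v. v \<in> V \<Longrightarrow> L v \<subseteq> N" "\<And>v. v \<in> V \<Longrightarrow> L v \<noteq> {}"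
    and E: "\<And>e. e \<in> E \<Longrightarrow> e \<subseteq> V \<and> (\<exists>l. \<forall>v\<in>e. l \<in> L v)"
  shows "tree_decomposition V E N F (\<lambda>t. {v \<in> V. t \<in> steiner N F (L v)})"
  unfolding tree_decomposition_def
proof (intro conjI ballI)
  fix v assume v: "v \<in> V"
  then obtain l where l: "l \<in> L v" using L(2) by blast
  then have "l \<in> N" using L(1)[OF v] by blast
  then have "l \<in> steiner N F (L v)" by (rule steiner_mem[OF l])
  then show "\<exists>t\<in>N. v \<in> {v \<in> V. t \<in> steiner N F (L v)}" using v \<open>l \<in> N\<close> by blast
  have bags: "{t \<in> N. v \<in> {v \<in> V. t \<in> steiner N F (L v)}} = steiner N F (L v)"
    using v by (auto simp: steiner_def)
  have edges: "{f \<in> F. \<forall>t\<in>f. v \<in> {v \<in> V. t \<in> steiner N F (L v)}}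
      = {f \<in> F. \<forall>t\<in>f. t \<in> steiner N F (L v)}"
    using v by auto
  show "connected_graph {t \<in> N. v \<in> {v \<in> V. t \<in> steiner N F (L v)}}
      {f \<in> F. \<forall>t\<in>f. v \<in> {v \<in> V. t \<in> steiner N F (L v)}}"
    unfolding bags edges by (rule steiner_connected[OF T L(1)[OF v]])
next
  fix e assume e: "e \<in> E"
  then obtain l where l: "\<forall>v\<in>e. l \<in> L v" and eV: "e \<subseteq> V" using E by blast
  obtain t where t: "t \<in> N" using T by (auto simp: tree_def)
  show "\<exists>t\<in>N. e \<subseteq> {v \<in> V. t \<in> steiner N F (L v)}"
  proof (cases "e = {}")
    case False
    then obtain u where "u \<in> e" by blast
    then have lN: "l \<in> N" using l eV L(1) by blast
    have "e \<subseteq> {v \<in> V. l \<in> steiner N F (L v)}" using l eV steiner_mem[OF _ lN] by blast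
    then show ?thesis using lN by blast
  qed (use t in blast)
next
  fix t assume "t \<in> N"
  show "{v \<in> V. t \<in> steiner N F (L v)} \<subseteq> V" by blast
qed (rule T)

section \<open>Bag sizes of Steiner tree decompositions\<close>

definition straddling :: "'a set \<Rightarrow> ('a \<Rightarrow> 'b set) \<Rightarrow> 'b set \<Rightarrow> 'a set" where
  "straddling V L B = {v \<in> V. L v \<inter> B \<noteq> {} \<and> \<not> L v \<subseteq> B}"

lemma bag_subset:
  assumes T: "tree N F" and r: "r \<in> N" and L: "\<And>v. L v \<subseteq> leaves N F"
  shows "{v \<in> V. t \<in> steiner N F (L v)} \<subseteq> {v \<in> V. t \<in> L v}
    \<union> (if t = r then {} else straddling V L (leaves_below N F r t))
    \<union> (\<Union>c\<in>children N F r t. straddling V L (leaves_below N F r c))"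
proof
  fix v assume "v \<in> {v \<in> V. t \<in> steiner N F (L v)}"
  then have v: "v \<in> V" "t \<in> steiner N F (L v)" by auto
  have "t = r \<Longrightarrow> L v \<subseteq> leaves_below N F r t" using L[of v] by (simp add: leaves_below_root)
  then show "v \<in> {v \<in> V. t \<in> L v} \<union> (if t = r then {} else straddling V L (leaves_below N F r t))
    \<union> (\<Union>c\<in>children N F r t. straddling V L (leaves_below N F r c))"
    using steiner_split[OF T r L v(2)] v(1) unfolding straddling_def by auto
qed

text \<open>If every cut is straddled by at most m vertices and every leaf is owned by at most
two vertices, then in a tree of maximum degree 3 every bag has at most 3m + 1 vertices:
an inner node meets at most three cuts, a leaf one cut and its two owners.\<close>
lemma bag_card:
  assumes T: "tree N F" and r: "r \<in> N" and t: "t \<in> N" and deg: "degree F t \<le> 3"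
    and fin: "finite V" and L: "\<And>v. L v \<subseteq> leaves N F"
    and cut: "\<And>s. s \<in> N \<Longrightarrow> card (straddling V L (leaves_below N F r s)) \<le> m"
    and owners: "card {v \<in> V. t \<in> L v} \<le> 2" and m: "1 \<le> m"
  shows "card {v \<in> V. t \<in> steiner N F (L v)} \<le> 3 * m + 1"
proof -
  let ?own = "{v \<in> V. t \<in> L v}"
  let ?up = "if t = r then {} else straddling V L (leaves_below N F r t)"
  let ?down = "\<Union>c\<in>children N F r t. straddling V L (leaves_below N F r c)"
  have fch: "finite (children N F r t)" and chN: "children N F r t \<subseteq> N"
    using tree_finite[OF T] by (auto simp: children_def)
  have up: "card ?up \<le> (if t = r then 0 else 1) * m" using cut[OF t] by simp
  have "card ?down \<le> (\<Sum>c\<in>children N F r t. card (straddling V L (leaves_below N F r c)))"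
    by (rule card_UN_le[OF fch])
  also have "\<dots> \<le> (\<Sum>c\<in>children N F r t. m)" using cut chN by (intro sum_mono) blast
  finally have down: "card ?down \<le> card (children N F r t) * m" by simp
  have "card ?up + card ?down \<le> ((if t = r then 0 else 1) + card (children N F r t)) * m"
    using up down by (simp only: add_mult_distrib)
  also have "\<dots> \<le> degree F t * m" using children_card[OF T r t] by (intro mult_le_mono1) simp
  finally have cuts: "card ?up + card ?down \<le> degree F t * m" .
  have "?own \<union> ?up \<union> ?down \<subseteq> V" by (auto simp: straddling_def)
  then have "finite (?own \<union> ?up \<union> ?down)" using fin by (rule finite_subset)
  then have "card {v \<in> V. t \<in> steiner N F (L v)} \<le> card (?own \<union> ?up \<union> ?down)"
    using bag_subset[OF T r L] by (rule card_mono)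
  also have "\<dots> \<le> card ?own + card ?up + card ?down"
    using card_Un_le[of "?own \<union> ?up" ?down] card_Un_le[of ?own ?up] by linarith
  finally have bag: "card {v \<in> V. t \<in> steiner N F (L v)} \<le> card ?own + card ?up + card ?down" .
  show ?thesis
  proof (cases "t \<in> leaves N F")
    case True
    then have "degree F t * m \<le> m" by (simp add: leaves_def)
    then show ?thesis using bag cuts owners m by linarith
  next
    case False
    then have "card ?own = 0" using L by (metis (no_types, lifting) card.empty empty_Collect_eq subsetD)
    moreover have "degree F t * m \<le> 3 * m" using deg by simp
    ultimately show ?thesis using bag cuts by linarith
  qed
qed

section \<open>Existence of branch decompositions\<close>

lemma distinct_hd_last: "distinct xs \<Longrightarrow> 2 \<le> length xs \<Longrightarrow> hd xs \<noteq> last xs"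
  by (cases xs rule: rev_cases) (auto simp: hd_append)

lemma cycle_two_nbrs:
  assumes w: "walk N F xs" and d: "distinct xs" and len: "3 \<le> length xs"
    and close: "{last xs, hd xs} \<in> F" and a: "a \<in> set xs"
  shows "\<exists>p q. p \<noteq> q \<and> {p, a} \<in> F \<and> {a, q} \<in> F"
proof -
  obtain ys zs where xs: "xs = ys @ a # zs" using a by (metis split_list)
  define p where "p = (if ys = [] then last xs else last ys)"
  define q where "q = (if zs = [] then hd xs else hd zs)"
  have "{p, a} \<in> F"
    using close xs walk_edge_mid[of N F ys "a # zs"] w by (cases "ys = []") (simp_all add: p_def)
  moreover have "{a, q} \<in> F"
    using close xs walk_edge_mid[of N F "ys @ [a]" zs] w
    by (cases "zs = []") (simp_all add: q_def insert_commute)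
  moreover have "p \<noteq> q"
  proof (cases "ys = []"; cases "zs = []")
    assume "ys \<noteq> []" "zs \<noteq> []"
    then show ?thesis using d xs by (auto simp: p_def q_def dest: last_in_set hd_in_set)
  qed (use d len xs distinct_hd_last[of ys] distinct_hd_last[of zs] in \<open>auto simp: p_def q_def\<close>)
  ultimately show ?thesis by blast
qed

lemma pendant_connected:
  assumes T: "tree N F" and l: "l \<in> N"
  shows "connected_graph (insert a N) (insert {l, a} F)"
proof -
  let ?N = "insert a N" and ?F = "insert {l, a} F"
  have old: "\<exists>W. walk ?N ?F W \<and> hd W = x \<and> last W = y" if "x \<in> N" "y \<in> N" for x y
    using T that walk_mono[of N F _ ?N ?F] unfolding tree_def connected_graph_def by blast
  have from_a: "\<exists>W. walk ?N ?F W \<and> hd W = a \<and> last W = y" if "y \<in> ?N" for y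
  proof (cases "y = a")
    case False
    then have "y \<in> N" using that by simp
    then obtain W where W: "walk ?N ?F W" "hd W = l" "last W = y" using old[OF l] by blast
    then have "walk ?N ?F (a # W)" using walk_nonempty[OF W(1)] by (simp add: walk_Cons insert_commute)
    then show ?thesis using W walk_nonempty[OF W(1)] by (intro exI[of _ "a # W"]) simp
  qed (intro exI[of _ "[a]"], simp)
  show ?thesis unfolding connected_graph_def
  proof (intro ballI)
    fix x y assume xy: "x \<in> ?N" "y \<in> ?N"
    show "\<exists>W. walk ?N ?F W \<and> hd W = x \<and> last W = y"
    proof (cases "x = a \<or> y = a")
      case True
      then show ?thesis
      proof
        assume "y = a"
        then obtain W where W: "walk ?N ?F W" "hd W = a" "last W = x" using from_a[OF xy(1)] by blast
        then show ?thesis using \<open>y = a\<close> walk_rev[OF W(1)] walk_nonempty[OF W(1)]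
          by (intro exI[of _ "rev W"]) (simp add: hd_rev last_rev)
      qed (use from_a xy in blast)
    qed (use old xy in blast)
  qed
qed

text \<open>A cycle through the pendant vertex would need two neighbours of it; a cycle avoiding it
already lies in the old tree.\<close>
lemma pendant_acyclic:
  assumes T: "tree N F" and a: "a \<notin> N"
  shows "\<not> has_cycle (insert a N) (insert {l, a} F)"
proof
  let ?N = "insert a N" and ?F = "insert {l, a} F"
  assume "has_cycle ?N ?F"
  then obtain xs where xs: "walk ?N ?F xs" "distinct xs" "3 \<le> length xs" "{last xs, hd xs} \<in> ?F"
    unfolding has_cycle_def by blast
  have a_free: "a \<notin> e" if "e \<in> F" for e using tree_edge[OF T that] a by blast
  show False
  proof (cases "a \<in> set xs")
    case True
    then obtain p q where "p \<noteq> q" "{p, a} \<in> ?F" "{a, q} \<in> ?F" using cycle_two_nbrs[OF xs] by blast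
    then show False using a_free by (auto simp: doubleton_eq_iff)
  next
    case False
    have in_F: "{x, y} \<in> F" if "{x, y} \<in> ?F" "x \<in> set xs" "y \<in> set xs" for x y
      using that False a_free by (auto simp: doubleton_eq_iff)
    have "walk N F xs" unfolding walk_def
    proof (intro conjI allI impI)
      show "xs \<noteq> []" "set xs \<subseteq> N" using xs(1) False walk_set walk_nonempty by blast+
      fix i assume "Suc i < length xs"
      then show "{xs ! i, xs ! Suc i} \<in> F" using xs(1) in_F[of "xs ! i" "xs ! Suc i"] unfolding walk_def by simp
    qed
    moreover have "{last xs, hd xs} \<in> F"
      using in_F[OF xs(4)] walk_nonempty[OF xs(1)] by simp
    ultimately show False using tree_acyclic[OF T] xs(2,3) unfolding has_cycle_def by blast
  qed
qed

lemma pendant_tree: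
  assumes T: "tree N F" and l: "l \<in> N" and a: "a \<notin> N"
  shows "tree (insert a N) (insert {l, a} F)"
proof -
  have "graph (insert a N) (insert {l, a} F)"
    using T l a unfolding tree_def graph_def by blast
  then show ?thesis
    using pendant_connected[OF T l] pendant_acyclic[OF T a] unfolding tree_def by blast
qed

lemma degree_insert_edge:
  assumes "finite F" "e \<notin> F"
  shows "degree (insert e F) t = degree F t + (if t \<in> e then 1 else 0)"
proof -
  have "{x \<in> insert e F. t \<in> x} = (if t \<in> e then insert e {x \<in> F. t \<in> x} else {x \<in> F. t \<in> x})"
    by auto
  then show ?thesis using assms by (simp add: degree_def)
qed

lemma degree_outside:
  assumes "tree N F" "t \<notin> N" shows "degree F t = 0"
proof -
  have "{e \<in> F. t \<in> e} = {}" using tree_edge[OF assms(1)] assms(2) by blast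
  then show ?thesis unfolding degree_def by (metis card.empty)
qed

lemma split_leaf:
  assumes T: "tree N F" and deg: "\<forall>t\<in>N. degree F t \<le> 3" and l: "l \<in> leaves N F"
    and ab: "a \<notin> N" "b \<notin> N" "a \<noteq> b"
  defines "N' \<equiv> insert b (insert a N)" and "F' \<equiv> insert {l, b} (insert {l, a} F)"
  shows "tree N' F'" "\<forall>t\<in>N'. degree F' t \<le> 3"
    "leaves N' F' = insert a (insert b (leaves N F - {l}))"
proof -
  have lN: "l \<in> N" and dl: "degree F l \<le> 1" using l by (auto simp: leaves_def)
  have T1: "tree (insert a N) (insert {l, a} F)" using pendant_tree[OF T lN ab(1)] .
  show "tree N' F'" unfolding N'_def F'_def using pendant_tree[OF T1] lN ab by simp
  have new_edge: "{l, x} \<notin> F" if "x \<notin> N" for x using tree_edge[OF T] that lN by (fastforce simp: doubleton_eq_iff)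
  have fF: "finite F" using tree_finite_edges[OF T] .
  have "{l, b} \<notin> insert {l, a} F" using new_edge[OF ab(2)] ab(3) by (auto simp: doubleton_eq_iff)
  then have deg': "degree F' t = degree F t + (if t \<in> {l, a} then 1 else 0) + (if t \<in> {l, b} then 1 else 0)" for t
    unfolding F'_def using degree_insert_edge[OF finite_insert[THEN iffD2, OF fF]]
      degree_insert_edge[OF fF new_edge[OF ab(1)]] by simp
  have d0: "degree F a = 0" "degree F b = 0" using degree_outside[OF T] ab by auto
  have abl: "a \<noteq> l" "b \<noteq> l" using ab lN by auto
  show "\<forall>t\<in>N'. degree F' t \<le> 3"
    using deg' deg dl d0 abl unfolding N'_def by (auto split: if_splits)
  show "leaves N' F' = insert a (insert b (leaves N F - {l}))"
    using deg' dl d0 abl ab lN unfolding N'_def leaves_def by (auto split: if_splits)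
qed

lemma bij_betw_split_leaf:
  assumes \<delta>: "bij_betw \<delta> L S" and l: "l \<in> L" and ab: "a \<notin> L" "b \<notin> L" "a \<noteq> b" and s: "s \<notin> S"
  shows "bij_betw (\<delta>(a := \<delta> l, b := s)) (insert a (insert b (L - {l}))) (insert s S)"
proof -
  let ?\<delta> = "\<delta>(a := \<delta> l, b := s)"
  have "bij_betw \<delta> (L - {l}) (S - {\<delta> l})" using bij_betw_DiffI[OF \<delta>, of "{l}" "{\<delta> l}"] l \<delta>
    by (auto simp: bij_betw_def)
  then have "bij_betw ?\<delta> (L - {l}) (S - {\<delta> l})" using ab by (subst bij_betw_cong) auto
  then have "bij_betw ?\<delta> (L - {l} \<union> {b}) (S - {\<delta> l} \<union> {s})"
    using notIn_Un_bij_betw3[of b "L - {l}" ?\<delta> "S - {\<delta> l}"] ab s by simp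
  moreover have "\<delta> l \<in> S" using \<delta> l by (auto simp: bij_betw_def)
  then have "\<delta> l \<notin> S - {\<delta> l} \<union> {s}" using s by auto
  ultimately have "bij_betw ?\<delta> (L - {l} \<union> {b} \<union> {a}) (S - {\<delta> l} \<union> {s} \<union> {\<delta> l})"
    using notIn_Un_bij_betw3[of a "L - {l} \<union> {b}" ?\<delta> "S - {\<delta> l} \<union> {s}"] ab by simp
  moreover have "S - {\<delta> l} \<union> {s} \<union> {\<delta> l} = insert s S" using \<open>\<delta> l \<in> S\<close> by auto
  ultimately show ?thesis by (simp add: insert_commute)
qed

lemma branch_decomposition_exists:
  fixes V :: "'b set"
  assumes "finite V" "V \<noteq> {}"
  shows "\<exists>N F \<delta>. branch_decomposition V E N F \<delta>"
  using assms unfolding branch_decomposition_def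
proof (induction V rule: finite_ne_induct)
  case (singleton s)
  have "leaves {0} {} = {0::nat}" by (simp add: leaves_def degree_def)
  then show ?case using tree_singleton[of 0]
    by (intro exI[of _ "{0::nat}"] exI[of _ "{}"] exI[of _ "\<lambda>_. s"]) (simp add: degree_def bij_betw_def)
next
  case (insert s S)
  then obtain N F \<delta> where T: "tree N F" and D: "\<forall>t\<in>N. degree F t \<le> 3"
    and B: "bij_betw \<delta> (leaves N F) S" by blast
  obtain l where l: "l \<in> leaves N F" using B insert.hyps(2) by (auto simp: bij_betw_def)
  define a where "a = Suc (Max N)"
  have fresh: "a \<notin> N" "Suc a \<notin> N" "a \<noteq> Suc a"
    using Max_ge[OF tree_finite[OF T]] by (fastforce simp: a_def)+
  then have "a \<notin> leaves N F" "Suc a \<notin> leaves N F" by (auto simp: leaves_def)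
  note split = split_leaf[OF T D l fresh] bij_betw_split_leaf[OF B l this fresh(3) insert.hyps(3)]
  show ?case using split by (metis (no_types, lifting))
qed

lemma mim_ge:
  assumes "finite E" "induced_matching_cut V E A M"
  shows "card M \<le> mim V E A"
proof -
  have "{M. induced_matching_cut V E A M} \<subseteq> Pow E"
    by (auto simp: induced_matching_cut_def cut_edges_def)
  then have "finite {M. induced_matching_cut V E A M}" using assms(1) by (meson finite_Pow_iff finite_subset)
  then show ?thesis unfolding mim_def using assms(2) by (intro Max_ge) auto
qed

text \<open>A single crossing edge is an induced matching.\<close>
lemma mim_pos:
  assumes "finite E" "g \<in> cut_edges V E A"
  shows "1 \<le> mim V E A"
proof -
  have "induced_matching_cut V E A {g}" using assms(2) by (simp add: induced_matching_cut_def)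
  then show ?thesis using mim_ge[OF assms(1)] by fastforce
qed

lemma mim_le_bd_mimw:
  assumes "finite N" "s \<in> N"
  shows "mim V E (\<delta> ` leaves_below N F r s) \<le> bd_mimw V E N F \<delta> r"
  unfolding bd_mimw_def using assms by (intro Max_ge) auto

lemma mimw_attained:
  assumes "finite V" "V \<noteq> {}"
  shows "\<exists>N F \<delta> r. branch_decomposition V E N F \<delta> \<and> r \<in> N \<and> mimw V E = bd_mimw V E N F \<delta> r"
proof -
  let ?K = "{k. \<exists>N F \<delta> r. branch_decomposition V E N F \<delta> \<and> r \<in> N \<and> k = bd_mimw V E N F \<delta> r}"
  obtain N F and \<delta> :: "nat \<Rightarrow> 'a" where "branch_decomposition V E N F \<delta>"
    using branch_decomposition_exists[OF assms] by blast
  moreover then obtain r where "r \<in> N" by (auto simp: branch_decomposition_def tree_def)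
  ultimately have "?K \<noteq> {}" by blast
  then have "Inf ?K \<in> ?K" by (rule Inf_nat_def1)
  then show ?thesis unfolding mimw_def by blast
qed

section \<open>Induced matchings from independent cut edges\<close>

lemma walk_crosses_cut:
  assumes "walk V E xs" "hd xs \<in> A" "last xs \<notin> A"
  shows "\<exists>g\<in>cut_edges V E A. g \<subseteq> set xs"
  using assms
proof (induction xs)
  case (Cons x xs)
  show ?case
  proof (cases "xs = []")
    case False
    then have w: "walk V E xs" "{x, hd xs} \<in> E" using Cons.prems(1) by (simp_all add: walk_Cons)
    show ?thesis
    proof (cases "hd xs \<in> A")
      case True
      then show ?thesis using Cons.IH[OF w(1)] Cons.prems(3) False by auto
    next
      case outside: False
      have "hd xs \<in> V" using walk_set[OF w(1)] False by auto
      then have "{x, hd xs} \<in> cut_edges V E A"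
        using w(2) Cons.prems(2) outside unfolding cut_edges_def by auto
      moreover have "{x, hd xs} \<subseteq> set (x # xs)" using False by simp
      ultimately show ?thesis by blast
    qed
  qed (use Cons.prems in simp)
qed (simp add: walk_def)

lemma independent_edges_induced_matching:
  assumes cut: "\<And>v. v \<in> S \<Longrightarrow> g v \<in> cut_edges V E A"
    and apart: "\<And>u u' h. u \<in> S \<Longrightarrow> u' \<in> S \<Longrightarrow> h \<in> E \<Longrightarrow> h \<inter> g u \<noteq> {} \<Longrightarrow> h \<inter> g u' \<noteq> {} \<Longrightarrow> u = u'"
  shows "inj_on g S" "induced_matching_cut V E A (g ` S)"
proof -
  have edge: "g v \<in> E" "g v \<inter> g v \<noteq> {}" if "v \<in> S" for v
    using cut[OF that] unfolding cut_edges_def by auto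
  show "inj_on g S"
    using apart edge by (metis inj_onI)
  show "induced_matching_cut V E A (g ` S)"
    unfolding induced_matching_cut_def
  proof (intro conjI ballI impI)
    show "g ` S \<subseteq> cut_edges V E A" using cut by blast
    fix e f assume "e \<in> g ` S" "f \<in> g ` S" "e \<noteq> f"
    then obtain u u' where u: "u \<in> S" "u' \<in> S" "e = g u" "f = g u'" "u \<noteq> u'" by blast
    show "e \<inter> f = {}" using apart[OF u(1,2) edge(1)[OF u(1)]] edge(2)[OF u(1)] u by auto
    show "\<not> (\<exists>h\<in>cut_edges V E A. h \<inter> e \<noteq> {} \<and> h \<inter> f \<noteq> {})"
      using apart[OF u(1,2)] u unfolding cut_edges_def by blast
  qed
qed

section \<open>Territories in G'\<close>

definition territory :: "'a set \<Rightarrow> 'a set set \<Rightarrow> 'a \<Rightarrow> 'a gvert set" where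
  "territory X E v = (if v \<in> X
     then insert (Xv v) ({Pv e v | e. e \<in> E \<and> v \<in> e} \<union> {Qv e v | e. e \<in> E \<and> v \<in> e})
     else insert (Yv v) {Qv e u | e u. e \<in> E \<and> u \<in> X \<and> e = {u, v}})"

definition hub :: "'a set \<Rightarrow> 'a \<Rightarrow> 'a gvert" where
  "hub X v = (if v \<in> X then Xv v else Yv v)"

lemma G'_E_XY: "u \<in> V \<Longrightarrow> v \<in> V \<Longrightarrow> {Xv v, Yv u} \<in> G'_E V E"
  unfolding G'_E_def by blast

lemma G'_E_PQ: "e \<in> E \<Longrightarrow> u \<in> e \<Longrightarrow> {Pv e u, Qv e u} \<in> G'_E V E"
  unfolding G'_E_def by blast

lemma G'_E_XP: "e \<in> E \<Longrightarrow> u \<in> e \<Longrightarrow> {Xv u, Pv e u} \<in> G'_E V E"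
  unfolding G'_E_def by blast

lemma G'_E_YQ: "e \<in> E \<Longrightarrow> e = {u, w} \<Longrightarrow> u \<noteq> w \<Longrightarrow> {Yv w, Qv e u} \<in> G'_E V E"
  unfolding G'_E_def by blast

lemma territory_nonempty: "territory X E v \<noteq> {}"
  by (simp add: territory_def)

definition territory_leaves ::
  "'a set \<Rightarrow> 'a set set \<Rightarrow> nat set \<Rightarrow> nat set set \<Rightarrow> (nat \<Rightarrow> 'a gvert) \<Rightarrow> 'a \<Rightarrow> nat set" where
  "territory_leaves X E N F \<delta> v = {l \<in> leaves N F. \<delta> l \<in> territory X E v}"

context
  fixes V :: "'a set" and E :: "'a set set" and X :: "'a set"
  assumes graph: "graph V E" and X_sub: "X \<subseteq> V"
    and sides: "\<forall>e\<in>E. \<exists>u w. e = {u, w} \<and> u \<in> X \<and> w \<in> V - X"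
begin

lemma edge_subset: "e \<in> E \<Longrightarrow> e \<subseteq> V"
  using graph by (auto simp: graph_def)

lemma finite_G'_V: "finite (G'_V V E)"
proof -
  have fV: "finite V" using graph by (simp add: graph_def)
  have "E \<subseteq> Pow V" using edge_subset by blast
  then have "finite E" using fV by (meson finite_Pow_iff finite_subset)
  then have "finite (SIGMA e:E. e)" using edge_subset fV by (meson finite_SigmaI finite_subset)
  moreover have "{Pv e u | e u. e \<in> E \<and> u \<in> e} \<subseteq> (\<lambda>(e, u). Pv e u) ` (SIGMA e:E. e)"
    "{Qv e u | e u. e \<in> E \<and> u \<in> e} \<subseteq> (\<lambda>(e, u). Qv e u) ` (SIGMA e:E. e)" by auto
  ultimately show ?thesis using fV unfolding G'_V_def by (meson finite_Un finite_imageI finite_subset)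
qed

lemma finite_G'_E: "finite (G'_E V E)"
proof -
  have "G'_E V E \<subseteq> Pow (G'_V V E)"
    using edge_subset unfolding G'_E_def G'_V_def by blast
  then show ?thesis using finite_G'_V by (meson finite_Pow_iff finite_subset)
qed

lemma territory_subset: "v \<in> V \<Longrightarrow> territory X E v \<subseteq> G'_V V E"
  by (auto simp: territory_def G'_V_def)

lemma territory_hub_walk:
  assumes v: "v \<in> V" and z: "z \<in> territory X E v"
  shows "\<exists>W. walk (G'_V V E) (G'_E V E) W \<and> hd W = hub X v \<and> last W = z \<and> set W \<subseteq> territory X E v"
proof (cases "v \<in> X")
  case True
  then consider "z = Xv v" | e where "e \<in> E" "v \<in> e" "z = Pv e v" | e where "e \<in> E" "v \<in> e" "z = Qv e v"
    using z by (auto simp: territory_def)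
  then show ?thesis
  proof cases
    case 1 then show ?thesis using v True by (intro exI[of _ "[Xv v]"]) (simp add: hub_def G'_V_def territory_def)
  next
    case 2 then show ?thesis using v True G'_E_XP[OF 2(1,2)]
      by (intro exI[of _ "[Xv v, Pv e v]"]) (auto simp: hub_def G'_V_def territory_def walk_Cons2)
  next
    case 3 then show ?thesis using v True G'_E_XP[OF 3(1,2)] G'_E_PQ[OF 3(1,2)]
      by (intro exI[of _ "[Xv v, Pv e v, Qv e v]"]) (auto simp: hub_def G'_V_def territory_def walk_Cons2)
  qed
next
  case False
  then consider "z = Yv v" | e u where "e \<in> E" "u \<in> X" "e = {u, v}" "z = Qv e u"
    using z by (auto simp: territory_def)
  then show ?thesis
  proof cases
    case 1 then show ?thesis using v False by (intro exI[of _ "[Yv v]"]) (simp add: hub_def G'_V_def territory_def)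
  next
    case 2
    then have "u \<noteq> v" using False by auto
    then show ?thesis using v False 2 G'_E_YQ[OF 2(1,3)]
      by (intro exI[of _ "[Yv v, Qv e u]"]) (auto simp: hub_def G'_V_def territory_def walk_Cons2)
  qed
qed

lemma territory_crossing:
  assumes v: "v \<in> V" and z1: "z1 \<in> territory X E v \<inter> A" and z2: "z2 \<in> territory X E v - A"
  shows "\<exists>g\<in>cut_edges (G'_V V E) (G'_E V E) A. g \<subseteq> territory X E v"
proof -
  obtain W1 W2 where W1: "walk (G'_V V E) (G'_E V E) W1" "hd W1 = hub X v" "last W1 = z1"
      "set W1 \<subseteq> territory X E v"
    and W2: "walk (G'_V V E) (G'_E V E) W2" "hd W2 = hub X v" "last W2 = z2"
      "set W2 \<subseteq> territory X E v"
    using territory_hub_walk[OF v] z1 z2 by (meson DiffD1 IntD1)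
  have "walk (G'_V V E) (G'_E V E) (rev W1)" "last (rev W1) = hd W2" "hd (rev W1) = z1"
    using walk_rev[OF W1(1)] W1 W2 walk_nonempty[OF W1(1)] by (simp_all add: hd_rev last_rev)
  note W = walk_join[OF this(1) W2(1) this(2)]
  obtain g where g: "g \<in> cut_edges (G'_V V E) (G'_E V E) A" "g \<subseteq> set (rev W1 @ tl W2)"
    using walk_crosses_cut[OF W(1)] W(2,3) \<open>hd (rev W1) = z1\<close> W2(3) z1 z2 by auto
  have "g \<subseteq> territory X E v" using g(2) W(4) W1(4) W2(4) by auto
  then show ?thesis using g(1) by blast
qed

lemma territory_X: "u \<in> X \<Longrightarrow> z \<in> territory X E u \<Longrightarrow> z = Xv u \<or> (\<exists>e. z = Pv e u \<or> z = Qv e u)"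
  by (auto simp: territory_def)

lemma territory_Y: "u \<notin> X \<Longrightarrow> z \<in> territory X E u \<Longrightarrow> z = Yv u \<or> (\<exists>e a. z = Qv e a \<and> e = {a, u} \<and> a \<in> X)"
  by (auto simp: territory_def)

lemma territory_owner:
  assumes h: "h \<in> G'_E V E" and side: "u \<in> X \<longleftrightarrow> u' \<in> X"
    and meet: "h \<inter> territory X E u \<noteq> {}" "h \<inter> territory X E u' \<noteq> {}"
  shows "u = u'"
proof -
  obtain z1 z2 where z: "z1 \<in> h" "z1 \<in> territory X E u" "z2 \<in> h" "z2 \<in> territory X E u'"
    using meet by blast
  have h_cases: "(\<exists>a b. h = {Xv a, Yv b}) \<or> (\<exists>e a. h = {Pv e a, Qv e a}) \<or> (\<exists>e a. h = {Xv a, Pv e a})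
      \<or> (\<exists>e a w. h = {Yv w, Qv e a} \<and> e = {a, w} \<and> a \<noteq> w)"
    using h unfolding G'_E_def by blast
  show ?thesis
  proof (cases "u \<in> X")
    case True
    then show ?thesis
      using h_cases z territory_X[OF True z(2)] territory_X[of u' z2] side by auto
  next
    case False
    have same: "u = u'" if "{a, u} = {a, u'}" "a \<in> X" for a
      using that False side by (auto simp: doubleton_eq_iff)
    show ?thesis
      using h_cases z territory_Y[OF False z(2)] territory_Y[of u' z2] side same False
      by (auto simp: doubleton_eq_iff)
  qed
qed

text \<open>A vertex of G' lies in at most two territories: q_{e,u} in those of the ends of e, any
other vertex only in the territory of its index.\<close>
lemma territory_owners_card:
  assumes z: "z \<in> G'_V V E"
  shows "card {v \<in> V. z \<in> territory X E v} \<le> 2"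
proof -
  have "\<exists>a b. {v \<in> V. z \<in> territory X E v} \<subseteq> {a, b}"
  proof (cases z)
    case (Qv e u)
    then obtain a b where "e = {a, b}" using z sides by (auto simp: G'_V_def)
    then have "{v \<in> V. z \<in> territory X E v} \<subseteq> {a, b}" using Qv by (auto simp: territory_def)
    then show ?thesis by blast
  next
    case (Xv u)
    then have "{v \<in> V. z \<in> territory X E v} \<subseteq> {u, u}" by (auto simp: territory_def split: if_splits)
    then show ?thesis by blast
  next
    case (Yv u)
    then have "{v \<in> V. z \<in> territory X E v} \<subseteq> {u, u}" by (auto simp: territory_def split: if_splits)
    then show ?thesis by blast
  next
    case (Pv e u)
    then have "{v \<in> V. z \<in> territory X E v} \<subseteq> {u, u}" by (auto simp: territory_def split: if_splits)
    then show ?thesis by blast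
  qed
  then obtain a b where sub: "{v \<in> V. z \<in> territory X E v} \<subseteq> {a, b}" by blast
  have "card {v \<in> V. z \<in> territory X E v} \<le> card {a, b}" by (rule card_mono) (simp_all add: sub)
  also have "\<dots> \<le> 2" by (cases "a = b") simp_all
  finally show ?thesis .
qed

lemma edge_territory:
  assumes e: "e \<in> E" shows "\<exists>z. \<forall>v\<in>e. z \<in> territory X E v"
proof -
  obtain u w where uw: "e = {u, w}" "u \<in> X" "w \<in> V - X" using sides e by blast
  then have "Qv e u \<in> territory X E u" "Qv e u \<in> territory X E w" using e by (auto simp: territory_def)
  then show ?thesis using uw(1) by blast
qed

text \<open>The territories on one side of the bipartition which are split by A contribute an
induced matching of the cut: one cut edge inside each of them.\<close>
lemma split_side_bound:
  assumes S: "S \<subseteq> V" and side: "\<forall>u\<in>S. \<forall>u'\<in>S. u \<in> X \<longleftrightarrow> u' \<in> X"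
    and split: "\<forall>v\<in>S. territory X E v \<inter> A \<noteq> {} \<and> \<not> territory X E v \<subseteq> A"
  shows "card S \<le> mim (G'_V V E) (G'_E V E) A"
proof -
  let ?C = "cut_edges (G'_V V E) (G'_E V E) A"
  have "\<forall>v\<in>S. \<exists>g. g \<in> ?C \<and> g \<subseteq> territory X E v"
  proof
    fix v assume v: "v \<in> S"
    then obtain z1 z2 where "z1 \<in> territory X E v \<inter> A" "z2 \<in> territory X E v - A" using split by blast
    moreover have "v \<in> V" using S v by blast
    ultimately show "\<exists>g. g \<in> ?C \<and> g \<subseteq> territory X E v"
      using territory_crossing by blast
  qed
  then obtain g where g: "\<forall>v\<in>S. g v \<in> ?C \<and> g v \<subseteq> territory X E v" by (rule bchoice[THEN exE])
  have apart: "u = u'" if u: "u \<in> S" "u' \<in> S" and h: "h \<in> G'_E V E" "h \<inter> g u \<noteq> {}" "h \<inter> g u' \<noteq> {}"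
    for u u' h
  proof (rule territory_owner[OF h(1)])
    show "u \<in> X \<longleftrightarrow> u' \<in> X" using side u by blast
    show "h \<inter> territory X E u \<noteq> {}" "h \<inter> territory X E u' \<noteq> {}" using g u h(2,3) by blast+
  qed
  have "\<And>v. v \<in> S \<Longrightarrow> g v \<in> ?C" using g by blast
  note matching = independent_edges_induced_matching[of S g, OF this apart]
  have "card S = card (g ` S)" using card_image[OF matching(1)] by simp
  also have "\<dots> \<le> mim (G'_V V E) (G'_E V E) A"
    by (rule mim_ge[OF finite_G'_E matching(2)])
  finally show ?thesis .
qed

text \<open>Splitting by sides: at most 2 mim territories are split by any cut of G'.\<close>
lemma split_territories_bound:
  "card {v \<in> V. territory X E v \<inter> A \<noteq> {} \<and> \<not> territory X E v \<subseteq> A} \<le> 2 * mim (G'_V V E) (G'_E V E) A"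
proof -
  let ?S = "{v \<in> V. territory X E v \<inter> A \<noteq> {} \<and> \<not> territory X E v \<subseteq> A}"
  have "card (?S \<inter> X) \<le> mim (G'_V V E) (G'_E V E) A" "card (?S - X) \<le> mim (G'_V V E) (G'_E V E) A"
    by (rule split_side_bound, blast, blast, blast)+
  moreover have "card ?S \<le> card (?S \<inter> X) + card (?S - X)"
    using card_Un_le[of "?S \<inter> X" "?S - X"] by (simp only: Int_Diff_Un)
  ultimately show ?thesis by linarith
qed

lemma territory_cut_bound:
  assumes \<delta>: "inj_on \<delta> (leaves N F)" and B: "B \<subseteq> leaves N F"
  shows "card (straddling V (territory_leaves X E N F \<delta>) B) \<le> 2 * mim (G'_V V E) (G'_E V E) (\<delta> ` B)"
proof -
  let ?L = "territory_leaves X E N F \<delta>"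
  have "straddling V ?L B \<subseteq>
      {v \<in> V. territory X E v \<inter> \<delta> ` B \<noteq> {} \<and> \<not> territory X E v \<subseteq> \<delta> ` B}"
  proof
    fix v assume v: "v \<in> straddling V ?L B"
    then obtain l l' where l: "l \<in> ?L v" "l \<in> B" and l': "l' \<in> ?L v" "l' \<notin> B"
      unfolding straddling_def by blast
    have "\<delta> l \<in> territory X E v \<inter> \<delta> ` B" using l by (auto simp: territory_leaves_def)
    moreover have "\<delta> l' \<in> territory X E v" "\<delta> l' \<notin> \<delta> ` B"
      using l' inj_on_image_mem_iff[OF \<delta> _ B] by (auto simp: territory_leaves_def)
    ultimately show "v \<in> {v \<in> V. territory X E v \<inter> \<delta> ` B \<noteq> {} \<and> \<not> territory X E v \<subseteq> \<delta> ` B}"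
      using v by (auto simp: straddling_def)
  qed
  moreover have "finite {v \<in> V. territory X E v \<inter> \<delta> ` B \<noteq> {} \<and> \<not> territory X E v \<subseteq> \<delta> ` B}"
    using graph by (simp add: graph_def)
  ultimately have "card (straddling V (territory_leaves X E N F \<delta>) B)
      \<le> card {v \<in> V. territory X E v \<inter> \<delta> ` B \<noteq> {} \<and> \<not> territory X E v \<subseteq> \<delta> ` B}"
    by (intro card_mono)
  also have "\<dots> \<le> 2 * mim (G'_V V E) (G'_E V E) (\<delta> ` B)"
    by (rule split_territories_bound)
  finally show ?thesis .
qed

lemma territory_leaf_owners:
  assumes \<delta>: "\<delta> ` leaves N F = G'_V V E"
  shows "card {v \<in> V. t \<in> territory_leaves X E N F \<delta> v} \<le> 2"
proof (cases "t \<in> leaves N F")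
  case True
  then have "{v \<in> V. t \<in> territory_leaves X E N F \<delta> v} = {v \<in> V. \<delta> t \<in> territory X E v}"
    by (auto simp: territory_leaves_def)
  then show ?thesis using territory_owners_card True \<delta> by auto
qed (simp add: territory_leaves_def)

text \<open>Some cut of a branch decomposition of G' (that of a non-root leaf labelled x_v or y_v)
crosses the edge x_v y_v, so the width is positive.\<close>
lemma bd_mimw_pos:
  assumes BD: "branch_decomposition (G'_V V E) (G'_E V E) N F \<delta>" and r: "r \<in> N" and V: "V \<noteq> {}"
  shows "1 \<le> bd_mimw (G'_V V E) (G'_E V E) N F \<delta> r"
proof -
  have T: "tree N F" and \<delta>: "bij_betw \<delta> (leaves N F) (G'_V V E)"
    using BD by (auto simp: branch_decomposition_def)
  obtain v where v: "v \<in> V" using V by blast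
  then have "Xv v \<in> G'_V V E" "Yv v \<in> G'_V V E" by (simp_all add: G'_V_def)
  then obtain l1 l2 where l: "l1 \<in> leaves N F" "l2 \<in> leaves N F" "\<delta> l1 = Xv v" "\<delta> l2 = Yv v"
    using \<delta> by (metis bij_betw_def imageE)
  then have "l1 \<noteq> l2" by auto
  then obtain t where "t \<in> {l1, l2}" "t \<noteq> r" by blast
  then have t: "t \<in> leaves N F" "t \<noteq> r" "\<delta> t \<in> {Xv v, Yv v}" using l by auto
  have "{Xv v, Yv v} \<in> cut_edges (G'_V V E) (G'_E V E) {\<delta> t}"
    using G'_E_XY[OF v v] \<open>Xv v \<in> G'_V V E\<close> \<open>Yv v \<in> G'_V V E\<close> t(3)
    unfolding cut_edges_def by (auto simp: insert_commute)
  then have "1 \<le> mim (G'_V V E) (G'_E V E) (\<delta> ` leaves_below N F r t)"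
    using mim_pos[OF finite_G'_E] leaves_below_leaf[OF T r t(1,2)] by simp
  also have "\<dots> \<le> bd_mimw (G'_V V E) (G'_E V E) N F \<delta> r"
    using mim_le_bd_mimw tree_finite[OF T] t(1) by (auto simp: leaves_def)
  finally show ?thesis .
qed

lemma territory_tree_decomposition:
  assumes BD: "branch_decomposition (G'_V V E) (G'_E V E) N F \<delta>"
  shows "tree_decomposition V E N F (\<lambda>t. {v \<in> V. t \<in> steiner N F (territory_leaves X E N F \<delta> v)})"
proof -
  let ?L = "territory_leaves X E N F \<delta>"
  have T: "tree N F" and onto: "\<delta> ` leaves N F = G'_V V E"
    using BD by (auto simp: branch_decomposition_def bij_betw_def)
  have labelled: "\<exists>l\<in>leaves N F. \<delta> l = z" if "z \<in> territory X E v" "v \<in> V" for z v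
  proof -
    have "z \<in> \<delta> ` leaves N F" using that territory_subset[OF \<open>v \<in> V\<close>] onto by blast
    then show ?thesis by (metis imageE)
  qed
  have LN: "?L v \<subseteq> N" if "v \<in> V" for v by (auto simp: territory_leaves_def leaves_def)
  have Lne: "?L v \<noteq> {}" if "v \<in> V" for v
  proof -
    obtain z where "z \<in> territory X E v" using territory_nonempty[of X E v] by blast
    then show ?thesis using labelled[OF _ that] by (fastforce simp: territory_leaves_def)
  qed
  have Ledge: "e \<subseteq> V \<and> (\<exists>l. \<forall>v\<in>e. l \<in> ?L v)" if e: "e \<in> E" for e
  proof -
    have eV: "e \<subseteq> V" by (rule edge_subset[OF e])
    obtain z where z: "\<forall>v\<in>e. z \<in> territory X E v" using edge_territory[OF e] by blast
    obtain u where "u \<in> e" using e sides by blast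
    then obtain l where "l \<in> leaves N F" "\<delta> l = z" using labelled[of z u] z eV by blast
    then show ?thesis using eV z by (auto simp: territory_leaves_def)
  qed
  show ?thesis using steiner_tree_decomposition[OF T LN Lne Ledge] .
qed

text \<open>The bags of this tree decomposition have at most 6k + 1 vertices, where k is the width
of the branch decomposition: bag_card with m = 2k.\<close>
lemma treewidth_le_bd_mimw:
  assumes BD: "branch_decomposition (G'_V V E) (G'_E V E) N F \<delta>" and r: "r \<in> N" and V: "V \<noteq> {}"
  shows "treewidth V E \<le> 6 * bd_mimw (G'_V V E) (G'_E V E) N F \<delta> r"
proof -
  let ?k = "bd_mimw (G'_V V E) (G'_E V E) N F \<delta> r" and ?L = "territory_leaves X E N F \<delta>"
  have T: "tree N F" and deg: "\<forall>t\<in>N. degree F t \<le> 3" and \<delta>: "bij_betw \<delta> (leaves N F) (G'_V V E)"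
    using BD by (auto simp: branch_decomposition_def)
  then have inj: "inj_on \<delta> (leaves N F)" and onto: "\<delta> ` leaves N F = G'_V V E"
    by (auto simp: bij_betw_def)
  have L: "?L v \<subseteq> leaves N F" for v by (auto simp: territory_leaves_def)
  have cut: "card (straddling V ?L (leaves_below N F r s)) \<le> 2 * ?k" if "s \<in> N" for s
  proof -
    have "card (straddling V ?L (leaves_below N F r s))
        \<le> 2 * mim (G'_V V E) (G'_E V E) (\<delta> ` leaves_below N F r s)"
      by (rule territory_cut_bound[OF inj leaves_below_subset])
    also have "\<dots> \<le> 2 * ?k" using mim_le_bd_mimw[OF tree_finite[OF T] that] by simp
    finally show ?thesis .
  qed
  have fin: "finite V" using graph by (simp add: graph_def)
  have pos: "1 \<le> 2 * ?k" using bd_mimw_pos[OF BD r V] by simp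
  have "card {v \<in> V. t \<in> steiner N F (?L v)} \<le> 6 * ?k + 1" if t: "t \<in> N" for t
    using bag_card[OF T r t _ fin L cut territory_leaf_owners[OF onto] pos] deg t by simp
  then have "td_width N (\<lambda>t. {v \<in> V. t \<in> steiner N F (?L v)}) \<le> 6 * ?k"
    using r by (intro td_width_le[OF tree_finite[OF T]]) auto
  then show ?thesis using treewidth_le[OF territory_tree_decomposition[OF BD]] by linarith
qed

end

theorem lemma12:
  fixes V :: "'a set" and E :: "'a set set"
  assumes "graph V E" and "bipartite V E"
  shows "treewidth V E \<le> 6 * mimw (G'_V V E) (G'_E V E)"
proof (cases "V = {}")
  case True
  then show ?thesis using treewidth_empty[of E] assms(1) by simp
next
  case False
  obtain X where X: "X \<subseteq> V" "\<forall>e\<in>E. \<exists>u w. e = {u, w} \<and> u \<in> X \<and> w \<in> V - X"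
    using assms(2) unfolding bipartite_def by blast
  have "G'_V V E \<noteq> {}" using False by (auto simp: G'_V_def)
  then obtain N F \<delta> r where "branch_decomposition (G'_V V E) (G'_E V E) N F \<delta>" "r \<in> N"
      "mimw (G'_V V E) (G'_E V E) = bd_mimw (G'_V V E) (G'_E V E) N F \<delta> r"
    using mimw_attained[OF finite_G'_V[OF assms(1) X]] by blast
  then show ?thesis using treewidth_le_bd_mimw[OF assms(1) X _ _ False] by simp
qed

end
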